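(* Let $R_1,R_2$ be commutative rings with nonzero identity, $I_1$ an ideal of $R_1$, $I_2$ an ideal of $R_2$, $R=R_1\times R_2$ and $I=I_1\times I_2$. (a) Let $x\in R_1$ and $y_1,y_2\in R_2$. Then $(x,y_1)$ is adjacent to $(x,y_2)$ in $\Gamma''_I(R)$ if and only if $y_1$ is adjacent to $y_2$ in $\Gamma''_{I_2}(R_2)$. (b) Let $x_1,x_2\in R_1$ and $y\in R_2$. Then $(x_1,y)$ is adjacent to $(x_2,y)$ in $\Gamma''_I(R)$ if and only if $x_1$ is adjacent to $x_2$ in $\Gamma''_{I_1}(R_1)$.
   Context: $R_1\times R_2$ has componentwise operations. For a commutative ring $S$ and an ideal $J$ of $S$, $\Gamma''_J(S)$ is the simple undirected graph whose vertex set is $\{x\in S\setminus J : xS+J\neq S\}$, with distinct vertices $x,y$ adjacent if and only if $x\notin yS+J$ and $y\notin xS+J$. *)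

theory Defs
  imports Main "HOL-Library.Product_Plus"
begin

instantiation prod :: (times, times) times
begin
definition times_prod_def: "x * y = (fst x * fst y, snd x * snd y)"
instance ..
end

instantiation prod :: (one, one) one
begin
definition one_prod_def: "1 = (1, 1)"
instance ..
end

lemma fst_mult_prod [simp]: "fst (x * y) = fst x * fst y"
  and snd_mult_prod [simp]: "snd (x * y) = snd x * snd y"
  and fst_one_prod [simp]: "fst 1 = 1" and snd_one_prod [simp]: "snd 1 = 1"
  by (simp_all add: times_prod_def one_prod_def)

instance prod :: (comm_ring_1, comm_ring_1) comm_ring_1
  by standard (auto simp: prod_eq_iff algebra_simps)

definition is_ideal :: "'a::comm_ring_1 set \<Rightarrow> bool" where
  "is_ideal J \<longleftrightarrow> 0 \<in> J \<and> (\<forall>x\<in>J. \<forall>y\<in>J. x + y \<in> J) \<and> (\<forall>x\<in>J. - x \<in> J)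
     \<and> (\<forall>r x. x \<in> J \<longrightarrow> r * x \<in> J)"

definition coset_ideal :: "'a::comm_ring_1 \<Rightarrow> 'a set \<Rightarrow> 'a set" where
  "coset_ideal x J = {x * s + j | s j. j \<in> J}"

definition gvert :: "'a::comm_ring_1 set \<Rightarrow> 'a set" where
  "gvert J = {x. x \<notin> J \<and> coset_ideal x J \<noteq> UNIV}"

definition gadj :: "'a::comm_ring_1 set \<Rightarrow> 'a \<Rightarrow> 'a \<Rightarrow> bool" where
  "gadj J x y \<longleftrightarrow> x \<in> gvert J \<and> y \<in> gvert J \<and> x \<noteq> y
     \<and> x \<notin> coset_ideal y J \<and> y \<notin> coset_ideal x J"

end

theory Submission
  imports Defs
begin

text \<open>Since \<open>x \<in> x R\<^sub>1 + I\<^sub>1\<close>, the first factor of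
  \<open>(x, y) R + I = (x R\<^sub>1 + I\<^sub>1) \<times> (y R\<^sub>2 + I\<^sub>2)\<close> always contains \<open>x\<close>, so whether
  \<open>(x, y\<^sub>1) \<in> (x, y\<^sub>2) R + I\<close> is decided in the second coordinate alone. The vertex
  conditions come for free: \<open>x \<notin> y S + J\<close> forces \<open>y S + J \<noteq> S\<close>, and \<open>y \<notin> x S + J\<close>
  forces \<open>y \<notin> J\<close> because \<open>J \<subseteq> x S + J\<close>.\<close>

lemma coset_ideal_Pair:
  "coset_ideal (a, b) (I \<times> J) = coset_ideal a I \<times> coset_ideal b J"
  unfolding coset_ideal_def by (auto simp: times_prod_def)

lemma mem_coset_ideal_self: "0 \<in> J \<Longrightarrow> x \<in> coset_ideal x J"
  unfolding coset_ideal_def by (rule CollectI, rule exI[of _ 1], rule exI[of _ 0]) simp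

lemma ideal_subset_coset_ideal: "J \<subseteq> coset_ideal x J"
proof
  fix j assume "j \<in> J"
  then have "j = x * 0 + j \<and> j \<in> J" by simp
  then show "j \<in> coset_ideal x J" unfolding coset_ideal_def by blast
qed

lemma gadj_iff:
  "gadj J x y \<longleftrightarrow> x \<noteq> y \<and> x \<notin> coset_ideal y J \<and> y \<notin> coset_ideal x J"
  using ideal_subset_coset_ideal[of J x] ideal_subset_coset_ideal[of J y]
  unfolding gadj_def gvert_def by blast

lemma gadj_Pair_same_fst:
  assumes "0 \<in> I"
  shows "gadj (I \<times> J) (x, y1) (x, y2) \<longleftrightarrow> gadj J y1 y2"
  using mem_coset_ideal_self[OF assms, of x] by (simp add: gadj_iff coset_ideal_Pair)

lemma gadj_Pair_same_snd:
  assumes "0 \<in> J"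
  shows "gadj (I \<times> J) (x1, y) (x2, y) \<longleftrightarrow> gadj I x1 x2"
  using mem_coset_ideal_self[OF assms, of y] by (simp add: gadj_iff coset_ideal_Pair)

theorem lemma2p3:
  fixes I1 :: "'a::comm_ring_1 set" and I2 :: "'b::comm_ring_1 set"
  assumes "is_ideal I1" and "is_ideal I2"
  shows "(\<forall>x y1 y2. gadj (I1 \<times> I2) (x, y1) (x, y2) \<longleftrightarrow> gadj I2 y1 y2)
       \<and> (\<forall>x1 x2 y. gadj (I1 \<times> I2) (x1, y) (x2, y) \<longleftrightarrow> gadj I1 x1 x2)"
proof -
  have "0 \<in> I1" "0 \<in> I2"
    using assms unfolding is_ideal_def by blast+
  then show ?thesis
    by (simp add: gadj_Pair_same_fst gadj_Pair_same_snd)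
qed

end
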